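(* Let $(E,\mathscr{T},\le)$ be a locally compact $T_2$-preordered Tychonoff space with $G(\le)=\bigcap_{f\in\mathcal{F}}G_f$, and let $\mathcal{H}\subseteq\mathcal{F}$ with $G(\le)=\bigcap_{h\in\mathcal{H}}G_h$. Then the $\mathcal{H}$-compactification $c:E\to cE$ is the smallest Hausdorff $T_2$-preorder compactification for which the functions in $\mathcal{H}$ are extendable as continuous isotone functions: it is a Hausdorff $T_2$-preorder compactification for which every $h\circ c^{-1}$, $h\in\mathcal{H}$, extends to a continuous isotone function on $cE$, and every Hausdorff $T_2$-preorder compactification $c':E\to c'E$ for which every $h\circ c'^{-1}$, $h\in\mathcal{H}$, extends to a continuous isotone function $c'E\to[0,1]$ dominates the $\mathcal{H}$-compactification.
   Context: $T_2$-preordered: the graph $G(\le)=\{(x,y):x\le y\}$ is closed in $E\times E$. $\mathcal{F}$ is the family of continuous isotone functions $f:E\to[0,1]$; $G_f=\{(x,y):f(x)\le f(y)\}$. $\mathcal{C}$ is the family of continuous functions $E\to[0,1]$ constant outside a compact set. The $\mathcal{H}$-compactification is $c:E\to[0,1]^{\mathcal{H}\cup\mathcal{C}}$, $c(x)=(g(x))_{g\in\mathcal{H}\cup\mathcal{C}}$, with $cE$ the closure of $c(E)$, the induced product topology, and preorder $x\le_c y$ iff $x_h\le y_h$ for all $h\in\mathcal{H}$. A Hausdorff $T_2$-preorder compactification of $E$ is a preorder embedding (continuous isotone injective, homeomorphism onto image, isotone inverse on image with induced preorder) $c:E\to cE$ with dense image into a compact Hausdorff space with a preorder having closed graph. $c_2$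 dominates $c_1$ if there is a continuous isotone $C:c_2E\to c_1E$ with $C\circ c_2=c_1$. *)

theory Defs
  imports "HOL-Analysis.Analysis"
begin

definition preorder_on_space :: "'a topology \<Rightarrow> ('a \<Rightarrow> 'a \<Rightarrow> bool) \<Rightarrow> bool" where
  "preorder_on_space X le \<longleftrightarrow>
     (\<forall>x\<in>topspace X. le x x) \<and>
     (\<forall>x\<in>topspace X. \<forall>y\<in>topspace X. \<forall>z\<in>topspace X. le x y \<longrightarrow> le y z \<longrightarrow> le x z)"

definition pgraph :: "'a topology \<Rightarrow> ('a \<Rightarrow> 'a \<Rightarrow> bool) \<Rightarrow> ('a \<times> 'a) set" where
  "pgraph X le = {(x, y). x \<in> topspace X \<and> y \<in> topspace X \<and> le x y}"

definition T2_preordered :: "'a topology \<Rightarrow> ('a \<Rightarrow> 'a \<Rightarrow> bool) \<Rightarrow> bool" where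
  "T2_preordered X le \<longleftrightarrow> preorder_on_space X le \<and> closedin (prod_topology X X) (pgraph X le)"

definition cont_iso_fns :: "'a topology \<Rightarrow> ('a \<Rightarrow> 'a \<Rightarrow> bool) \<Rightarrow> ('a \<Rightarrow> real) set" where
  "cont_iso_fns X le = {f. continuous_map X (top_of_set {0..1}) f \<and> monotone_on (topspace X) le (\<le>) f}"

definition const_out_compact :: "'a topology \<Rightarrow> ('a \<Rightarrow> real) set" where
  "const_out_compact X = {g. continuous_map X (top_of_set {0..1}) g \<and>
      (\<exists>K k. compactin X K \<and> (\<forall>x\<in>topspace X - K. g x = k))}"

definition hcomp_map :: "'a topology \<Rightarrow> ('a \<Rightarrow> real) set \<Rightarrow> 'a \<Rightarrow> (('a \<Rightarrow> real) \<Rightarrow> real)" where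
  "hcomp_map X H x = (\<lambda>g\<in>H \<union> const_out_compact X. g x)"

definition hcube :: "'a topology \<Rightarrow> ('a \<Rightarrow> real) set \<Rightarrow> (('a \<Rightarrow> real) \<Rightarrow> real) topology" where
  "hcube X H = product_topology (\<lambda>_. top_of_set {0..1}) (H \<union> const_out_compact X)"

definition hcomp_top :: "'a topology \<Rightarrow> ('a \<Rightarrow> real) set \<Rightarrow> (('a \<Rightarrow> real) \<Rightarrow> real) topology" where
  "hcomp_top X H = subtopology (hcube X H) (hcube X H closure_of (hcomp_map X H ` topspace X))"

definition hcomp_le :: "('a \<Rightarrow> real) set \<Rightarrow> (('a \<Rightarrow> real) \<Rightarrow> real) \<Rightarrow> (('a \<Rightarrow> real) \<Rightarrow> real) \<Rightarrow> bool" where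
  "hcomp_le H p q \<longleftrightarrow> (\<forall>h\<in>H. p h \<le> q h)"

definition preorder_embedding ::
  "'a topology \<Rightarrow> ('a \<Rightarrow> 'a \<Rightarrow> bool) \<Rightarrow> 'b topology \<Rightarrow> ('b \<Rightarrow> 'b \<Rightarrow> bool) \<Rightarrow> ('a \<Rightarrow> 'b) \<Rightarrow> bool" where
  "preorder_embedding X le Y leY c \<longleftrightarrow> embedding_map X Y c \<and>
     (\<forall>x\<in>topspace X. \<forall>y\<in>topspace X. le x y \<longleftrightarrow> leY (c x) (c y))"

definition T2_preorder_compactification ::
  "'a topology \<Rightarrow> ('a \<Rightarrow> 'a \<Rightarrow> bool) \<Rightarrow> 'b topology \<Rightarrow> ('b \<Rightarrow> 'b \<Rightarrow> bool) \<Rightarrow> ('a \<Rightarrow> 'b) \<Rightarrow> bool" where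
  "T2_preorder_compactification X le Y leY c \<longleftrightarrow>
     compact_space Y \<and> Hausdorff_space Y \<and> T2_preordered Y leY \<and>
     preorder_embedding X le Y leY c \<and> Y closure_of (c ` topspace X) = topspace Y"

definition extends_cont_iso ::
  "'a topology \<Rightarrow> 'b topology \<Rightarrow> ('b \<Rightarrow> 'b \<Rightarrow> bool) \<Rightarrow> ('a \<Rightarrow> 'b) \<Rightarrow> ('a \<Rightarrow> real) \<Rightarrow> bool" where
  "extends_cont_iso X Y leY c h \<longleftrightarrow>
     (\<exists>e. continuous_map Y (top_of_set {0..1}) e \<and> monotone_on (topspace Y) leY (\<le>) e \<and>
          (\<forall>x\<in>topspace X. e (c x) = h x))"

definition dominates ::
  "'a topology \<Rightarrow> 'b topology \<Rightarrow> ('b \<Rightarrow> 'b \<Rightarrow> bool) \<Rightarrow> ('a \<Rightarrow> 'b) \<Rightarrow>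
   'c topology \<Rightarrow> ('c \<Rightarrow> 'c \<Rightarrow> bool) \<Rightarrow> ('a \<Rightarrow> 'c) \<Rightarrow> bool" where
  "dominates X Y2 le2 c2 Y1 le1 c1 \<longleftrightarrow>
     (\<exists>C. continuous_map Y2 Y1 C \<and> monotone_on (topspace Y2) le2 le1 C \<and>
          (\<forall>x\<in>topspace X. C (c2 x) = c1 x))"

end

theory Submission
  imports Defs
begin

text \<open>
  The functions in \<open>\<H> \<union> \<C>\<close> separate points from closed sets (\<open>\<C>\<close> alone does, by local
  compactness and complete regularity), so evaluation embeds \<open>E\<close> into the cube \<open>[0,1]^(\<H> \<union> \<C>)\<close>,
  and \<open>cE\<close> is compact Hausdorff with closed preorder graph since the preorder is cut out by
  continuous coordinate inequalities; \<open>c\<close> is an order embedding because \<open>\<H>\<close> determines \<open>\<le>\<close>.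
  For minimality, let \<open>c'\<close> be a compactification to which all \<open>h \<in> \<H>\<close> extend isotonically.
  Every \<open>g \<in> \<C>\<close> extends continuously as well: \<open>c'(E)\<close> is open in \<open>c'E\<close> (a dense locally
  compact subspace of a Hausdorff space), so \<open>g\<close> can be pasted with its constant value
  outside the closed set \<open>c'(K)\<close>. The extensions form a continuous isotone map
  \<open>c'E \<rightarrow> [0,1]^(\<H> \<union> \<C>)\<close> which agrees with \<open>c\<close> on \<open>E\<close> and so, by density, lands in \<open>cE\<close>.
\<close>

lemma const_out_compact_separating:
  assumes "locally_compact_space X" "completely_regular_space X" "openin X U" "x \<in> U"
  obtains g where "g \<in> const_out_compact X" "g x = 0" "\<forall>y\<in>topspace X - U. g y = 1"
proof -
  have x: "x \<in> topspace X" using assms(3,4) openin_subset by blast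
  obtain V K where V: "openin X V" and K: "compactin X K" and "x \<in> V" "V \<subseteq> K"
    using assms(1) x unfolding locally_compact_space_def by blast
  have "closedin X (topspace X - (U \<inter> V))" using assms(3) V by blast
  moreover have "x \<in> topspace X - (topspace X - (U \<inter> V))" using assms(4) x \<open>x \<in> V\<close> by blast
  ultimately obtain g :: "'a \<Rightarrow> real" where g: "continuous_map X (top_of_set {0..1}) g"
      "g x = 0" "g ` (topspace X - (U \<inter> V)) \<subseteq> {1}"
    using assms(2) unfolding completely_regular_space_def by blast
  have "g \<in> const_out_compact X"
    unfolding const_out_compact_def using g(1,3) K \<open>V \<subseteq> K\<close> by blast
  with g show thesis using that by blast
qed

lemma const_out_compact_unit_value:
  assumes "g \<in> const_out_compact X"
  obtains K k where "compactin X K" "k \<in> {0..1}" "\<forall>x\<in>topspace X - K. g x = k"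
proof -
  obtain K k where g: "continuous_map X (top_of_set {0..1}) g" and K: "compactin X K"
    and gk: "\<forall>x\<in>topspace X - K. g x = k"
    using assms unfolding const_out_compact_def by blast
  show thesis
  proof (cases "topspace X \<subseteq> K")
    case True
    then show thesis using that[of K 0] K by auto
  next
    case False
    then obtain x where "x \<in> topspace X - K" by blast
    then have "k \<in> {0..1}" using continuous_map_image_subset_topspace[OF g] gk by auto
    then show thesis using that K gk by blast
  qed
qed

lemma embedding_map_imp_continuous_map:
  "embedding_map X Y f \<Longrightarrow> continuous_map X Y f"
  unfolding embedding_map_def
  by (rule continuous_map_into_fulltopology, rule homeomorphic_imp_continuous_map)

lemma open_map_evaluation:
  fixes I :: "('a \<Rightarrow> real) set"
  assumes cont: "\<And>g. g \<in> I \<Longrightarrow> continuous_map X (top_of_set {0..1}) g"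
    and sep: "\<And>U x. \<lbrakk>openin X U; x \<in> U\<rbrakk> \<Longrightarrow> \<exists>g\<in>I. g x = 0 \<and> (\<forall>y\<in>topspace X - U. g y = 1)"
  shows "open_map X (subtopology (product_topology (\<lambda>_. top_of_set {0..1}) I)
           ((\<lambda>x. \<lambda>g\<in>I. g x) ` topspace X)) (\<lambda>x. \<lambda>g\<in>I. g x)"
proof -
  define cube where "cube = product_topology (\<lambda>_. top_of_set {0..1::real}) I"
  define e where "e x = (\<lambda>g\<in>I. g x)" for x
  define EI where "EI = e ` topspace X"
  have e_cont: "continuous_map X cube e"
    unfolding cube_def e_def continuous_map_componentwise using cont by auto
  have "openin (subtopology cube EI) (e ` U)" if U: "openin X U" for U
  proof (subst openin_subopen, intro ballI)
    fix p assume "p \<in> e ` U"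
    then obtain x where x: "x \<in> U" "p = e x" by blast
    obtain g where g: "g \<in> I" "g x = 0" "\<forall>y\<in>topspace X - U. g y = 1"
      using sep[OF U x(1)] by blast
    define W where "W = {q \<in> topspace cube. q g \<in> {..<1}}"
    have "continuous_map cube (top_of_set {0..1}) (\<lambda>q. q g)"
      unfolding cube_def by (rule continuous_map_product_projection[OF g(1)])
    then have "continuous_map cube euclideanreal (\<lambda>q. q g)"
      by (rule continuous_map_into_fulltopology)
    then have "openin cube W" unfolding W_def by (rule openin_continuous_map_preimage) auto
    then have "openin (subtopology cube EI) (W \<inter> EI)" by (rule openin_subtopology_Int)
    moreover have "p \<in> W \<inter> EI"
    proof -
      have "x \<in> topspace X" using U x(1) openin_subset by blast
      then have "e x \<in> topspace cube" using continuous_map_image_subset_topspace[OF e_cont] by blast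
      then show ?thesis using \<open>x \<in> topspace X\<close> x(2) g(1,2) by (simp add: W_def EI_def e_def)
    qed
    moreover have "W \<inter> EI \<subseteq> e ` U"
    proof
      fix q assume "q \<in> W \<inter> EI"
      then obtain y where y: "y \<in> topspace X" "q = e y" "g y < 1"
        using g(1) by (auto simp: W_def EI_def e_def)
      then have "y \<in> U" using g(3) by (cases "y \<in> U") auto
      then show "q \<in> e ` U" using y by blast
    qed
    ultimately show "\<exists>T. openin (subtopology cube EI) T \<and> p \<in> T \<and> T \<subseteq> e ` U" by blast
  qed
  then have "open_map X (subtopology cube EI) e"
    by (simp add: open_map_def)
  then show ?thesis unfolding cube_def EI_def e_def[abs_def] .
qed

lemma embedding_map_evaluation:
  fixes I :: "('a \<Rightarrow> real) set"
  assumes t1: "t1_space X"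
    and cont: "\<And>g. g \<in> I \<Longrightarrow> continuous_map X (top_of_set {0..1}) g"
    and sep: "\<And>U x. \<lbrakk>openin X U; x \<in> U\<rbrakk> \<Longrightarrow> \<exists>g\<in>I. g x = 0 \<and> (\<forall>y\<in>topspace X - U. g y = 1)"
  shows "embedding_map X (product_topology (\<lambda>_. top_of_set {0..1}) I) (\<lambda>x. \<lambda>g\<in>I. g x)"
proof -
  define cube where "cube = product_topology (\<lambda>_. top_of_set {0..1::real}) I"
  define e where "e = (\<lambda>x. \<lambda>g\<in>I. g x)"
  define EI where "EI = e ` topspace X"
  have e_cont: "continuous_map X cube e"
    unfolding cube_def e_def continuous_map_componentwise using cont by auto
  have e_inj: "inj_on e (topspace X)"
  proof (rule inj_onI, rule ccontr)
    fix x y assume x: "x \<in> topspace X" and y: "y \<in> topspace X" and "e x = e y" "x \<noteq> y"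
    have "openin X (topspace X - {y})" using t1 y by (simp add: closedin_t1_singleton openin_diff)
    then obtain g where "g \<in> I" "g x = 0" "\<forall>z\<in>topspace X - (topspace X - {y}). g z = 1"
      using sep x \<open>x \<noteq> y\<close> by blast
    then have "g y = 1" using y by blast
    have "e x g = e y g" using \<open>e x = e y\<close> by simp
    then show False using \<open>g \<in> I\<close> \<open>g x = 0\<close> \<open>g y = 1\<close> by (simp add: e_def)
  qed
  have "continuous_map X (subtopology cube EI) e"
    using e_cont by (simp add: EI_def continuous_map_in_subtopology)
  moreover have "open_map X (subtopology cube EI) e"
    unfolding cube_def EI_def e_def using cont sep by (rule open_map_evaluation)
  moreover have "e ` topspace X = topspace (subtopology cube EI)"
    using continuous_map_image_subset_topspace[OF e_cont] by (simp add: EI_def Int_absorb1)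
  ultimately have "homeomorphic_map X (subtopology cube EI) e"
    using e_inj by (intro bijective_open_imp_homeomorphic_map)
  then show ?thesis unfolding embedding_map_def cube_def EI_def e_def .
qed

lemma embedding_map_hcomp_map:
  assumes "locally_compact_space X" "completely_regular_space X" "Hausdorff_space X"
    and "\<And>h. h \<in> H \<Longrightarrow> continuous_map X (top_of_set {0..1}) h"
  shows "embedding_map X (hcube X H) (hcomp_map X H)"
  unfolding hcube_def hcomp_map_def
proof (rule embedding_map_evaluation)
  show "t1_space X" using assms(3) by (rule Hausdorff_imp_t1_space)
  show "continuous_map X (top_of_set {0..1}) g" if "g \<in> H \<union> const_out_compact X" for g
    using that assms(4) by (auto simp: const_out_compact_def)
  show "\<exists>g\<in>H \<union> const_out_compact X. g x = 0 \<and> (\<forall>y\<in>topspace X - U. g y = 1)"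
    if "openin X U" "x \<in> U" for U x
    using const_out_compact_separating[OF assms(1,2) that] by blast
qed

lemma openin_dense_locally_compact_image:
  assumes lc: "locally_compact_space X" and hY: "Hausdorff_space Y"
    and emb: "embedding_map X Y c" and dense: "Y closure_of (c ` topspace X) = topspace Y"
  shows "openin Y (c ` topspace X)"
proof (subst openin_subopen, intro ballI)
  fix y assume "y \<in> c ` topspace X"
  then obtain x where x: "x \<in> topspace X" "y = c x" by blast
  have hm: "homeomorphic_map X (subtopology Y (c ` topspace X)) c"
    using emb by (simp add: embedding_map_def)
  have cc: "continuous_map X Y c"
    using emb by (rule embedding_map_imp_continuous_map)
  obtain U K where U: "openin X U" and K: "compactin X K" and "x \<in> U" "U \<subseteq> K"
    using lc x unfolding locally_compact_space_def by blast
  have "openin (subtopology Y (c ` topspace X)) (c ` U)"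
    using homeomorphic_map_openness_eq[OF hm] U by blast
  then obtain W where W: "openin Y W" "c ` U = W \<inter> c ` topspace X"
    unfolding openin_subtopology by blast
  have "W \<subseteq> Y closure_of (W \<inter> c ` topspace X)"
    using openin_Int_closure_of_subset[OF W(1), of "c ` topspace X"] openin_subset[OF W(1)] dense
    by blast
  also have "\<dots> \<subseteq> Y closure_of (c ` K)"
    using W(2) \<open>U \<subseteq> K\<close> by (metis closure_of_mono image_mono)
  also have "\<dots> = c ` K"
    using compactin_imp_closedin[OF hY image_compactin[OF K cc]] by (simp add: closure_of_eq)
  also have "\<dots> \<subseteq> c ` topspace X"
    using compactin_subset_topspace[OF K] by blast
  finally show "\<exists>W. openin Y W \<and> y \<in> W \<and> W \<subseteq> c ` topspace X"
    using W x \<open>x \<in> U\<close> by blast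
qed

lemma continuous_map_open_cover2:
  assumes "openin Y S" "openin Y T" "topspace Y \<subseteq> S \<union> T"
    and "continuous_map (subtopology Y S) Z f" "continuous_map (subtopology Y T) Z f"
  shows "continuous_map Y Z f"
proof (rule pasting_lemma[where I="{S, T}" and T=id and f="\<lambda>_. f"])
  show "openin Y (id U)" if "U \<in> {S, T}" for U
    using that assms(1,2) by auto
  show "continuous_map (subtopology Y (id U)) Z f" if "U \<in> {S, T}" for U
    using that assms(4,5) by auto
  show "\<exists>U. U \<in> {S, T} \<and> y \<in> id U \<and> f y = f y" if "y \<in> topspace Y" for y
    using that assms(3) by auto
qed simp

lemma const_out_compact_extension:
  assumes lc: "locally_compact_space X" and hY: "Hausdorff_space Y"
    and emb: "embedding_map X Y c" and dense: "Y closure_of (c ` topspace X) = topspace Y"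
    and g: "g \<in> const_out_compact X"
  obtains e where "continuous_map Y (top_of_set {0..1}) e" "\<forall>x\<in>topspace X. e (c x) = g x"
proof -
  define E where "E = c ` topspace X"
  have hm: "homeomorphic_map X (subtopology Y E) c"
    using emb by (simp add: embedding_map_def E_def)
  then obtain c' where "homeomorphic_maps X (subtopology Y E) c c'"
    using homeomorphic_map_maps by blast
  then have c'_cont: "continuous_map (subtopology Y E) X c'"
    and c'c: "\<And>x. x \<in> topspace X \<Longrightarrow> c' (c x) = x"
    by (auto simp: homeomorphic_maps_def)
  have cc: "continuous_map X Y c"
    using emb by (rule embedding_map_imp_continuous_map)
  have g_cont: "continuous_map X (top_of_set {0..1}) g"
    using g by (simp add: const_out_compact_def)
  obtain K k where K: "compactin X K" and k: "k \<in> {0..1}" and gk: "\<forall>x\<in>topspace X - K. g x = k"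
    using const_out_compact_unit_value[OF g] .
  have cK: "closedin Y (c ` K)"
    using compactin_imp_closedin[OF hY image_compactin[OF K cc]] .
  define e where "e y = (if y \<in> E then g (c' y) else k)" for y
  have "continuous_map Y (top_of_set {0..1}) e"
  proof (rule continuous_map_open_cover2)
    show "openin Y E"
      using openin_dense_locally_compact_image[OF lc hY emb dense] by (simp add: E_def)
    show "openin Y (topspace Y - c ` K)"
      using cK by (simp add: openin_diff)
    show "topspace Y \<subseteq> E \<union> (topspace Y - c ` K)"
      using compactin_subset_topspace[OF K] by (auto simp: E_def)
    have "continuous_map (subtopology Y E) (top_of_set {0..1}) (g \<circ> c')"
      using c'_cont g_cont by (rule continuous_map_compose)
    then show "continuous_map (subtopology Y E) (top_of_set {0..1}) e"
      by (rule continuous_map_eq) (simp add: e_def)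
    show "continuous_map (subtopology Y (topspace Y - c ` K)) (top_of_set {0..1}) e"
    proof (rule continuous_map_eq)
      show "continuous_map (subtopology Y (topspace Y - c ` K)) (top_of_set {0..1}) (\<lambda>_. k)"
        using k by simp
      show "k = e y" if "y \<in> topspace (subtopology Y (topspace Y - c ` K))" for y
      proof (cases "y \<in> E")
        case True
        then obtain x where x: "x \<in> topspace X" "y = c x" by (auto simp: E_def)
        with that have "x \<notin> K" by auto
        then show ?thesis using True x gk c'c by (simp add: e_def)
      qed (simp add: e_def)
    qed
  qed
  moreover have "\<forall>x\<in>topspace X. e (c x) = g x"
    using c'c by (simp add: e_def E_def)
  ultimately show thesis using that by blast
qed

lemma continuous_map_hcomp_top_of_extensions:
  assumes dense: "Y closure_of (c ` topspace X) = topspace Y"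
    and cont: "\<And>g. g \<in> H \<union> const_out_compact X \<Longrightarrow> continuous_map Y (top_of_set {0..1}) (F g)"
    and ext: "\<And>g x. \<lbrakk>g \<in> H \<union> const_out_compact X; x \<in> topspace X\<rbrakk> \<Longrightarrow> F g (c x) = g x"
  shows "continuous_map Y (hcomp_top X H) (\<lambda>y. \<lambda>g\<in>H \<union> const_out_compact X. F g y)"
proof -
  define C where "C y = (\<lambda>g\<in>H \<union> const_out_compact X. F g y)" for y
  have C_cube: "continuous_map Y (hcube X H) C"
    unfolding hcube_def continuous_map_componentwise using cont by (auto simp: C_def)
  have "C ` (Y closure_of (c ` topspace X)) \<subseteq> hcube X H closure_of (C ` c ` topspace X)"
    by (rule continuous_map_image_closure_subset[OF C_cube])
  also have "C ` c ` topspace X = hcomp_map X H ` topspace X"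
    unfolding image_image C_def hcomp_map_def using ext by (intro image_cong restrict_ext) simp_all
  finally have "C ` topspace Y \<subseteq> hcube X H closure_of (hcomp_map X H ` topspace X)"
    by (simp only: dense)
  then show ?thesis
    using C_cube unfolding C_def[abs_def]
    by (simp add: hcomp_top_def continuous_map_in_subtopology image_subset_iff_funcset)
qed

lemma dominates_hcomp:
  assumes lc: "locally_compact_space X"
    and comp: "T2_preorder_compactification X le Y leY c"
    and ext: "\<forall>h\<in>H. extends_cont_iso X Y leY c h"
  shows "dominates X Y leY c (hcomp_top X H) (hcomp_le H) (hcomp_map X H)"
proof -
  have hY: "Hausdorff_space Y" and emb: "embedding_map X Y c"
    and dense: "Y closure_of (c ` topspace X) = topspace Y"
    using comp by (simp_all add: T2_preorder_compactification_def preorder_embedding_def)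
  have "\<forall>g\<in>H \<union> const_out_compact X. \<exists>e. continuous_map Y (top_of_set {0..1}) e
          \<and> (g \<in> H \<longrightarrow> monotone_on (topspace Y) leY (\<le>) e) \<and> (\<forall>x\<in>topspace X. e (c x) = g x)"
  proof
    fix g assume g: "g \<in> H \<union> const_out_compact X"
    show "\<exists>e. continuous_map Y (top_of_set {0..1}) e
          \<and> (g \<in> H \<longrightarrow> monotone_on (topspace Y) leY (\<le>) e) \<and> (\<forall>x\<in>topspace X. e (c x) = g x)"
    proof (cases "g \<in> H")
      case True
      then show ?thesis using ext unfolding extends_cont_iso_def by blast
    next
      case False
      then obtain e where "continuous_map Y (top_of_set {0..1}) e" "\<forall>x\<in>topspace X. e (c x) = g x"
        using g const_out_compact_extension[OF lc hY emb dense] by blast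
      then show ?thesis using False by blast
    qed
  qed
  then obtain F where F: "\<forall>g\<in>H \<union> const_out_compact X. continuous_map Y (top_of_set {0..1}) (F g)
          \<and> (g \<in> H \<longrightarrow> monotone_on (topspace Y) leY (\<le>) (F g)) \<and> (\<forall>x\<in>topspace X. F g (c x) = g x)"
    by (auto dest: bchoice)
  have F_cont: "\<And>g. g \<in> H \<union> const_out_compact X \<Longrightarrow> continuous_map Y (top_of_set {0..1}) (F g)"
    and F_mono: "\<And>h. h \<in> H \<Longrightarrow> monotone_on (topspace Y) leY (\<le>) (F h)"
    and F_ext: "\<And>g x. \<lbrakk>g \<in> H \<union> const_out_compact X; x \<in> topspace X\<rbrakk> \<Longrightarrow> F g (c x) = g x"
    using F by auto
  define C where "C y = (\<lambda>g\<in>H \<union> const_out_compact X. F g y)" for y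
  have "continuous_map Y (hcomp_top X H) C"
    unfolding C_def[abs_def] using dense F_cont F_ext by (rule continuous_map_hcomp_top_of_extensions)
  moreover have "monotone_on (topspace Y) leY (hcomp_le H) C"
    using F_mono by (auto simp: monotone_on_def hcomp_le_def C_def)
  moreover have "C (c x) = hcomp_map X H x" if "x \<in> topspace X" for x
    unfolding C_def hcomp_map_def using F_ext that by (intro restrict_ext) simp
  ultimately show ?thesis
    unfolding dominates_def by blast
qed

lemma T2_preordered_pointwise_le:
  assumes "\<And>i. i \<in> I \<Longrightarrow> continuous_map Y euclideanreal (f i)"
  shows "T2_preordered Y (\<lambda>p q. \<forall>i\<in>I. f i p \<le> f i q)"
  unfolding T2_preordered_def
proof
  show "preorder_on_space Y (\<lambda>p q. \<forall>i\<in>I. f i p \<le> f i q)"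
    unfolding preorder_on_space_def by (meson order_trans order_refl)
  let ?P = "prod_topology Y Y"
  define G where "G i = {z \<in> topspace ?P. f i (snd z) - f i (fst z) \<in> {0..}}" for i
  have "closedin ?P (G i)" if "i \<in> I" for i
    unfolding G_def
  proof (rule closedin_continuous_map_preimage)
    show "continuous_map ?P euclideanreal (\<lambda>z. f i (snd z) - f i (fst z))"
      using continuous_map_compose[OF continuous_map_fst assms[OF that]]
        continuous_map_compose[OF continuous_map_snd assms[OF that]]
      by (intro continuous_map_diff) (simp_all add: o_def)
  qed simp
  then have "closedin ?P (\<Inter> (insert (topspace ?P) (G ` I)))"
    using closedin_topspace[of ?P] by (intro closedin_Inter) auto
  moreover have "pgraph Y (\<lambda>p q. \<forall>i\<in>I. f i p \<le> f i q) = \<Inter> (insert (topspace ?P) (G ` I))"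
    by (auto simp: pgraph_def G_def)
  ultimately show "closedin ?P (pgraph Y (\<lambda>p q. \<forall>i\<in>I. f i p \<le> f i q))"
    by simp
qed

lemma continuous_map_hcomp_top_eval:
  assumes "h \<in> H"
  shows "continuous_map (hcomp_top X H) (top_of_set {0..1}) (\<lambda>p. p h)"
  unfolding hcomp_top_def hcube_def
  by (rule continuous_map_from_subtopology, rule continuous_map_product_projection) (use assms in blast)

lemma compact_space_hcomp_top: "compact_space (hcomp_top X H)"
  unfolding hcomp_top_def
proof (rule compact_space_subtopology, rule closedin_compact_space)
  show "compact_space (hcube X H)"
    by (simp add: hcube_def compact_space_product_topology compact_space_subtopology)
qed simp

lemma Hausdorff_space_hcomp_top: "Hausdorff_space (hcomp_top X H)"
  by (simp add: hcomp_top_def hcube_def Hausdorff_space_subtopology Hausdorff_space_product_topology)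

lemma T2_preordered_hcomp_le: "T2_preordered (hcomp_top X H) (hcomp_le H)"
proof -
  have "T2_preordered (hcomp_top X H) (\<lambda>p q. \<forall>h\<in>H. p h \<le> q h)"
    using T2_preordered_pointwise_le[of H "hcomp_top X H" "\<lambda>h p. p h"]
      continuous_map_hcomp_top_eval continuous_map_into_fulltopology by blast
  then show ?thesis by (simp add: hcomp_le_def[abs_def])
qed

lemma T2_preorder_compactification_hcomp:
  assumes "locally_compact_space X" "completely_regular_space X" "Hausdorff_space X"
    and "\<And>h. h \<in> H \<Longrightarrow> continuous_map X (top_of_set {0..1}) h"
    and le_iff: "\<forall>x\<in>topspace X. \<forall>y\<in>topspace X. le x y \<longleftrightarrow> (\<forall>h\<in>H. h x \<le> h y)"
  shows "T2_preorder_compactification X le (hcomp_top X H) (hcomp_le H) (hcomp_map X H)"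
proof -
  define cl where "cl = hcube X H closure_of (hcomp_map X H ` topspace X)"
  have emb: "embedding_map X (hcube X H) (hcomp_map X H)"
    using embedding_map_hcomp_map assms(1-4) by blast
  have "hcomp_map X H ` topspace X \<subseteq> cl"
    using continuous_map_image_subset_topspace[OF embedding_map_imp_continuous_map[OF emb]]
    unfolding cl_def by (rule closure_of_subset)
  moreover have "cl \<subseteq> topspace (hcube X H)"
    unfolding cl_def by (rule closure_of_subset_topspace)
  ultimately have "embedding_map X (hcomp_top X H) (hcomp_map X H)"
    and "hcomp_top X H closure_of (hcomp_map X H ` topspace X) = topspace (hcomp_top X H)"
    using emb by (simp_all add: hcomp_top_def cl_def[symmetric] embedding_map_in_subtopology
        closure_of_subtopology Int_absorb1)
  moreover have "le x y \<longleftrightarrow> hcomp_le H (hcomp_map X H x) (hcomp_map X H y)"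
    if "x \<in> topspace X" "y \<in> topspace X" for x y
    using le_iff that by (simp add: hcomp_le_def hcomp_map_def)
  ultimately show ?thesis
    unfolding T2_preorder_compactification_def preorder_embedding_def
    using compact_space_hcomp_top Hausdorff_space_hcomp_top T2_preordered_hcomp_le by blast
qed

lemma extends_cont_iso_hcomp:
  assumes "h \<in> H"
  shows "extends_cont_iso X (hcomp_top X H) (hcomp_le H) (hcomp_map X H) h"
  unfolding extends_cont_iso_def
proof (intro exI conjI)
  show "continuous_map (hcomp_top X H) (top_of_set {0..1}) (\<lambda>p. p h)"
    using assms by (rule continuous_map_hcomp_top_eval)
  show "monotone_on (topspace (hcomp_top X H)) (hcomp_le H) (\<le>) (\<lambda>p. p h)"
    using assms by (auto simp: monotone_on_def hcomp_le_def)
  show "\<forall>x\<in>topspace X. hcomp_map X H x h = h x"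
    using assms by (simp add: hcomp_map_def)
qed

theorem mainTheorem16:
  fixes X :: "'a topology" and le :: "'a \<Rightarrow> 'a \<Rightarrow> bool" and H :: "('a \<Rightarrow> real) set"
  assumes "locally_compact_space X"
    and "completely_regular_space X" and "Hausdorff_space X"
    and "T2_preordered X le"
    and "\<forall>x\<in>topspace X. \<forall>y\<in>topspace X. le x y \<longleftrightarrow> (\<forall>f\<in>cont_iso_fns X le. f x \<le> f y)"
    and "H \<subseteq> cont_iso_fns X le"
    and "\<forall>x\<in>topspace X. \<forall>y\<in>topspace X. le x y \<longleftrightarrow> (\<forall>h\<in>H. h x \<le> h y)"
  shows "T2_preorder_compactification X le (hcomp_top X H) (hcomp_le H) (hcomp_map X H)
       \<and> (\<forall>h\<in>H. extends_cont_iso X (hcomp_top X H) (hcomp_le H) (hcomp_map X H) h)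
       \<and> (\<forall>(Y :: 'b topology) leY c'.
            T2_preorder_compactification X le Y leY c' \<and>
            (\<forall>h\<in>H. extends_cont_iso X Y leY c' h)
            \<longrightarrow> dominates X Y leY c' (hcomp_top X H) (hcomp_le H) (hcomp_map X H))"
proof (intro conjI ballI allI impI)
  have "\<And>h. h \<in> H \<Longrightarrow> continuous_map X (top_of_set {0..1}) h"
    using assms(6) by (auto simp: cont_iso_fns_def)
  then show "T2_preorder_compactification X le (hcomp_top X H) (hcomp_le H) (hcomp_map X H)"
    using T2_preorder_compactification_hcomp assms(1-3,7) by blast
next
  show "extends_cont_iso X (hcomp_top X H) (hcomp_le H) (hcomp_map X H) h" if "h \<in> H" for h
    using that by (rule extends_cont_iso_hcomp)
next
  fix Y :: "'b topology" and leY c'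
  assume "T2_preorder_compactification X le Y leY c' \<and> (\<forall>h\<in>H. extends_cont_iso X Y leY c' h)"
  then show "dominates X Y leY c' (hcomp_top X H) (hcomp_le H) (hcomp_map X H)"
    using dominates_hcomp[OF assms(1)] by blast
qed

end
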